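(* Let $X$ be a K3 surface with $\rho(X)=2$, let $a_1,b_1,c\in\mathbb N$, and let $\widetilde H\in N(X)$ be primitive with $\widetilde H^2=2a_1b_1c^2$ and $\widetilde H\cdot N(X)=\gamma\mathbb Z$ where $\gamma\mid 2a_1b_1$. Put $n=2a_1b_1c^2/\gamma$. Let $K(\widetilde H)=\widetilde H^\perp=\mathbb Zf(\widetilde H)$ in $N(X)$ and define $\delta$ by $\det N(X)=-\gamma\delta$. Then $\delta\in\mathbb N$, $f(\widetilde H)^2=-2a_1b_1c^2\delta/\gamma$, and there is $\mu$ coprime to $n$ with $\delta\equiv\mu^2\gamma\pmod{4a_1b_1c^2/\gamma}$ such that $$N(X)=\Big[\widetilde H,\ f(\widetilde H),\ \frac{\mu\widetilde H+f(\widetilde H)}{n}\Big]=\Big\{\frac{x\widetilde H+yf(\widetilde H)}{n}:\ x,y\in\mathbb Z,\ x\equiv\mu y\pmod n\Big\},$$ and for such $z=(x\widetilde H+yf(\widetilde H))/n$ one has $z^2=(\gamma x^2-\delta y^2)/n$. The class $\pm\mu\bmod n$ (the invariant of the pair $\widetilde H\in N(X)$) is independent of the sign of $f(\widetilde H)$ up to $\pm$. For any primitive $P\in N(X)$ with $P^2=2a_1b_1c^2$, $P\cdot N(X)=\gamma\mathbb Z$ and the same invariant $\pm\mu$, there is an isometry $\phi\in O(N(X))$ with $\phi(\widetilde H)=P$.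
   Context: $N(X)$ denotes the Picard lattice of the K3 surface $X$ (an even hyperbolic lattice of rank $\rho(X)$). For a primitive $P\in N(X)$ with $P^2=2a_1b_1c^2$ and $P\cdot N(X)=\gamma\mathbb Z$, its invariant is the class $\pm\mu_P\bmod n$ of an integer $\mu_P$ with $(\mu_PP+f(P))/n\in N(X)$, where $f(P)$ generates $P^\perp$ in $N(X)$. $O(N(X))$ is the isometry group of $N(X)$. *)

theory Defs
  imports "HOL-Number_Theory.Number_Theory"
begin

text \<open>A rank-2 lattice is modelled as \<open>\<int>\<^sup>2 = int \<times> int\<close> with an integral symmetric
bilinear form given by its Gram matrix \<open>[[p,q],[q,r]]\<close>, encoded as a triple \<open>(p,q,r)\<close>.\<close>

type_synonym vec = "int \<times> int"
type_synonym gram = "int \<times> int \<times> int"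

definition vadd :: "vec \<Rightarrow> vec \<Rightarrow> vec" where
  "vadd u v = (fst u + fst v, snd u + snd v)"

definition smul :: "int \<Rightarrow> vec \<Rightarrow> vec" where
  "smul k v = (k * fst v, k * snd v)"

definition bf :: "gram \<Rightarrow> vec \<Rightarrow> vec \<Rightarrow> int" where
  "bf G u v = (case G of (p, q, r) \<Rightarrow>
      p * fst u * fst v + q * (fst u * snd v + snd u * fst v) + r * snd u * snd v)"

definition gram_det :: "gram \<Rightarrow> int" where
  "gram_det G = (case G of (p, q, r) \<Rightarrow> p * r - q ^ 2)"

definition even_hyperbolic :: "gram \<Rightarrow> bool" where
  "even_hyperbolic G = (case G of (p, q, r) \<Rightarrow> even p \<and> even r \<and> p * r - q ^ 2 < 0)"

definition primitive :: "vec \<Rightarrow> bool" where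
  "primitive v = (gcd (fst v) (snd v) = 1)"

definition perp_generator :: "gram \<Rightarrow> vec \<Rightarrow> vec \<Rightarrow> bool" where
  "perp_generator G H f = (bf G H f = 0 \<and> (\<forall>v. bf G H v = 0 \<longrightarrow> (\<exists>k. v = smul k f)))"

definition pairing_ideal :: "gram \<Rightarrow> vec \<Rightarrow> int \<Rightarrow> bool" where
  "pairing_ideal G H \<gamma> = (range (bf G H) = {\<gamma> * k | k. True})"

definition invariant_rep :: "gram \<Rightarrow> int \<Rightarrow> vec \<Rightarrow> vec \<Rightarrow> int \<Rightarrow> bool" where
  "invariant_rep G n P f \<mu> =
     (perp_generator G P f \<and> (\<exists>w. smul n w = vadd (smul \<mu> P) f))"

definition isometry :: "gram \<Rightarrow> (vec \<Rightarrow> vec) \<Rightarrow> bool" where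
  "isometry G \<phi> = ((\<forall>u v. \<phi> (vadd u v) = vadd (\<phi> u) (\<phi> v)) \<and> bij \<phi> \<and>
                    (\<forall>u v. bf G (\<phi> u) (\<phi> v) = bf G u v))"

end

(* Complete the primitive vector H to a basis (H, W) of the lattice with W = (mu H + f)/n.  In this
   basis the Gram matrix is [[gamma n, gamma mu], [gamma mu, W.W]], so the determinant is
   -gamma delta with delta = gamma mu^2 - n W.W, f = n W - mu H has f.f = -n delta, and since
   H pairs with the lattice in gamma (n Z + mu Z) = gamma Z, mu is prime to n.  The invariant
   determines the Gram matrix of such a basis: a different choice of f only changes W by a sign
   and multiples of H.  So for P with the same norm, pairing ideal and invariant, (P, W') can be
   chosen with the same Gram matrix as (H, W), and H |-> P, W |-> W' is an isometry. *)

theory Submission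
  imports Defs
begin

definition cross :: "vec \<Rightarrow> vec \<Rightarrow> int" where
  "cross u v = fst u * snd v - snd u * fst v"

lemma cross_vadd_left [simp]: "cross (vadd u v) w = cross u w + cross v w"
  and cross_vadd_right [simp]: "cross u (vadd v w) = cross u v + cross u w"
  and cross_smul_left [simp]: "cross (smul k u) v = k * cross u v"
  and cross_smul_right [simp]: "cross u (smul k v) = k * cross u v"
  and cross_self [simp]: "cross u u = 0"
  by (simp_all add: cross_def vadd_def smul_def algebra_simps)

lemma bf_vadd_left [simp]: "bf G (vadd u v) w = bf G u w + bf G v w"
  and bf_vadd_right [simp]: "bf G u (vadd v w) = bf G u v + bf G u w"
  and bf_smul_left [simp]: "bf G (smul k u) v = k * bf G u v"
  and bf_smul_right [simp]: "bf G u (smul k v) = k * bf G u v"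
  by (cases G; simp add: bf_def vadd_def smul_def algebra_simps)+

lemma bf_sym: "bf G u v = bf G v u"
  by (cases G) (simp add: bf_def algebra_simps)

lemma smul_smul [simp]: "smul k (smul l v) = smul (k * l) v"
  by (simp add: smul_def)

lemma smul_one [simp]: "smul 1 v = v"
  by (simp add: smul_def)

lemma even_bf_self: "even_hyperbolic G \<Longrightarrow> even (bf G v v)"
  by (cases G) (auto simp: even_hyperbolic_def bf_def)

lemma gram_det_neg: "even_hyperbolic G \<Longrightarrow> gram_det G < 0"
  by (cases G) (simp add: even_hyperbolic_def gram_det_def)

lemma gram_det_cross:
  "bf G u u * bf G v v - (bf G u v)\<^sup>2 = gram_det G * (cross u v)\<^sup>2"
  by (cases G) (simp add: bf_def gram_det_def cross_def power2_eq_square algebra_simps)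

lemma cross_expansion:
  "vadd (smul (cross v Y) X) (smul (cross X v) Y) = smul (cross X Y) v"
  by (simp add: cross_def vadd_def smul_def prod_eq_iff algebra_simps)

lemma mult_self_eq_1_if_abs_eq_1: "\<bar>c\<bar> = 1 \<Longrightarrow> c * (c :: int) = 1"
  using abs_mult_self_eq[of c] by simp

lemma basis_decomp:
  assumes "\<bar>cross X Y\<bar> = 1"
  shows "v = vadd (smul (cross X Y * cross v Y) X) (smul (cross X Y * cross X v) Y)"
proof -
  have "smul (cross X Y) (vadd (smul (cross v Y) X) (smul (cross X v) Y)) = v"
    unfolding cross_expansion using mult_self_eq_1_if_abs_eq_1[OF assms] by simp
  then show ?thesis by (simp add: smul_def vadd_def algebra_simps)
qed

lemma primitive_has_basis_partner:
  assumes "primitive X" shows "\<exists>Y. cross X Y = 1"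
proof -
  obtain u v where "u * fst X + v * snd X = 1"
    using bezout_int[of "fst X" "snd X"] assms by (auto simp: primitive_def)
  then show ?thesis by (intro exI[of _ "(-v, u)"]) (simp add: cross_def algebra_simps)
qed

lemma primitive_basis_partner_pairing:
  assumes "primitive X" "pairing_ideal G X \<gamma>"
  obtains Y m where "cross X Y = 1" "bf G X Y = \<gamma> * m"
proof -
  obtain Y where "cross X Y = 1" using primitive_has_basis_partner[OF assms(1)] ..
  moreover have "bf G X Y \<in> range (bf G X)" by simp
  then obtain m where "bf G X Y = \<gamma> * m"
    using assms(2) unfolding pairing_ideal_def by auto
  ultimately show ?thesis using that by blast
qed

lemma pairing_ideal_coprime:
  assumes basis: "\<bar>cross X Y\<bar> = 1" and "bf G X X = \<gamma> * n" "bf G X Y = \<gamma> * m" "\<gamma> \<noteq> 0"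
    and "pairing_ideal G X \<gamma>"
  shows "coprime m n"
proof -
  have "\<gamma> * 1 \<in> range (bf G X)"
    using assms(5) unfolding pairing_ideal_def by blast
  then obtain v where v: "bf G X v = \<gamma>" by auto
  define a b where "a = cross X Y * cross v Y" and "b = cross X Y * cross X v"
  have "bf G X v = a * bf G X X + b * bf G X Y"
    using arg_cong[OF basis_decomp[OF basis, of v], of "bf G X"] unfolding a_def b_def by simp
  then have "\<gamma> * (a * n + b * m) = \<gamma> * 1"
    using v assms(2,3) by (simp add: algebra_simps)
  then have bezout: "a * n + b * m = 1" using \<open>\<gamma> \<noteq> 0\<close> by simp
  show ?thesis
  proof (rule coprimeI)
    fix d assume "d dvd m" "d dvd n"
    then have "d dvd a * n + b * m" by simp
    then show "is_unit d" using bezout by simp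
  qed
qed

lemma perp_generator_eq:
  assumes basis: "\<bar>cross X Y\<bar> = 1" and XX: "bf G X X = \<gamma> * n" and XY: "bf G X Y = \<gamma> * m"
    and "\<gamma> \<noteq> 0" and "pairing_ideal G X \<gamma>" and "perp_generator G X f"
  shows "\<exists>\<sigma>. \<bar>\<sigma>\<bar> = 1 \<and> f = smul \<sigma> (vadd (smul (- m) X) (smul n Y))"
proof -
  define f0 where "f0 = vadd (smul (- m) X) (smul n Y)"
  have "bf G X f0 = 0" unfolding f0_def by (simp add: XX XY)
  then obtain k where k: "f0 = smul k f"
    using \<open>perp_generator G X f\<close> unfolding perp_generator_def by blast
  have "k dvd n"
  proof -
    have "k * cross X f = n * cross X Y" using arg_cong[OF k, of "cross X"] by (simp add: f0_def)
    then have "k dvd n * cross X Y * cross X Y" by (metis dvd_triv_left dvd_mult2)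
    then show ?thesis using mult_self_eq_1_if_abs_eq_1[OF basis] by (simp add: mult.assoc)
  qed
  moreover have "k dvd m"
  proof -
    have "k * cross f Y = - m * cross X Y" using arg_cong[OF k, of "\<lambda>v. cross v Y"] by (simp add: f0_def)
    then have "k dvd m * cross X Y * cross X Y" by (metis dvd_triv_left dvd_mult2 dvd_minus_iff mult_minus_left)
    then show ?thesis using mult_self_eq_1_if_abs_eq_1[OF basis] by (simp add: mult.assoc)
  qed
  ultimately have "is_unit k"
    using pairing_ideal_coprime[OF assms(1-5)] by (meson coprime_common_divisor)
  then have k_unit: "\<bar>k\<bar> = 1" by simp
  moreover have "f = smul k f0" using k mult_self_eq_1_if_abs_eq_1[OF k_unit] by simp
  ultimately show ?thesis unfolding f0_def by blast
qed

lemma invariant_rep_exists: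
  assumes "primitive X" "bf G X X = \<gamma> * n" "\<gamma> \<noteq> 0" "pairing_ideal G X \<gamma>" "perp_generator G X f"
  shows "\<exists>\<mu>. invariant_rep G n X f \<mu>"
proof -
  obtain Y m where Y: "cross X Y = 1" "bf G X Y = \<gamma> * m"
    using primitive_basis_partner_pairing[OF assms(1,4)] .
  then have "\<bar>cross X Y\<bar> = 1" by simp
  then obtain \<sigma> where "f = smul \<sigma> (vadd (smul (- m) X) (smul n Y))"
    using perp_generator_eq[OF _ assms(2) Y(2) assms(3-5)] by blast
  then have "smul n (smul \<sigma> Y) = vadd (smul (\<sigma> * m) X) f"
    by (simp add: smul_def vadd_def algebra_simps)
  then show ?thesis using assms(5) unfolding invariant_rep_def by blast
qed

text \<open>\<open>W = (\<mu> X + f)/n\<close> completes \<open>X\<close> to a basis because \<open>f = \<plusminus>(n Y - m X)\<close> for a basis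
  partner \<open>Y\<close> of \<open>X\<close>.\<close>
lemma invariant_rep_basis:
  assumes "primitive X" "bf G X X = \<gamma> * n" "\<gamma> \<noteq> 0" "n \<noteq> 0" "pairing_ideal G X \<gamma>"
    and "invariant_rep G n X f \<mu>"
  obtains W where "smul n W = vadd (smul \<mu> X) f" "\<bar>cross X W\<bar> = 1" "bf G X W = \<gamma> * \<mu>"
proof -
  obtain W where W: "smul n W = vadd (smul \<mu> X) f" and f: "perp_generator G X f"
    using assms(6) unfolding invariant_rep_def by blast
  obtain Y m where Y: "cross X Y = 1" "bf G X Y = \<gamma> * m"
    using primitive_basis_partner_pairing[OF assms(1,5)] .
  then have "\<bar>cross X Y\<bar> = 1" by simp
  then obtain \<sigma> where "\<bar>\<sigma>\<bar> = 1" "f = smul \<sigma> (vadd (smul (- m) X) (smul n Y))"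
    using perp_generator_eq[OF _ assms(2) Y(2) assms(3,5) f] by blast
  then have "n * cross X W = n * \<sigma>"
    using arg_cong[OF W, of "cross X"] Y(1) by simp
  then have "\<bar>cross X W\<bar> = 1" using \<open>n \<noteq> 0\<close> \<open>\<bar>\<sigma>\<bar> = 1\<close> by simp
  moreover have "n * bf G X W = \<mu> * bf G X X + bf G X f"
    using arg_cong[OF W, of "bf G X"] by simp
  then have "n * bf G X W = n * (\<gamma> * \<mu>)"
    using assms(2) f unfolding perp_generator_def by (simp add: ac_simps)
  then have "bf G X W = \<gamma> * \<mu>" using \<open>n \<noteq> 0\<close> by simp
  ultimately show ?thesis using W that by blast
qed

lemma bf_complement_self:
  assumes "smul n W = vadd (smul \<mu> X) f" "bf G X X = \<gamma> * n" "bf G X W = \<gamma> * \<mu>"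
  shows "bf G f f = - n * (\<gamma> * \<mu>\<^sup>2 - n * bf G W W)"
proof -
  have f: "f = vadd (smul n W) (smul (- \<mu>) X)"
    using assms(1) by (simp add: smul_def vadd_def prod_eq_iff algebra_simps)
  have "bf G f f = n * n * bf G W W - 2 * n * \<mu> * bf G X W + \<mu> * \<mu> * bf G X X"
    by (subst (1 2) f) (simp add: bf_sym[of G W X] algebra_simps)
  also have "\<dots> = - n * (\<gamma> * \<mu>\<^sup>2 - n * bf G W W)"
    unfolding assms(2,3) by (simp add: power2_eq_square algebra_simps)
  finally show ?thesis .
qed

lemma bf_fraction:
  assumes "smul n z = vadd (smul x X) (smul y f)" "bf G X f = 0"
    and "bf G X X = \<gamma> * n" "bf G f f = - n * \<delta>" "n \<noteq> 0"
  shows "n * bf G z z = \<gamma> * x\<^sup>2 - \<delta> * y\<^sup>2"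
proof -
  have "n * (n * bf G z z) = bf G (smul n z) (smul n z)" by simp
  also have "\<dots> = x * x * bf G X X + 2 * x * y * bf G X f + y * y * bf G f f"
    unfolding assms(1) by (simp add: bf_sym[of G f X] algebra_simps)
  also have "\<dots> = n * (\<gamma> * x\<^sup>2 - \<delta> * y\<^sup>2)"
    unfolding assms(2-4) by (simp add: power2_eq_square algebra_simps)
  finally show ?thesis using \<open>n \<noteq> 0\<close> by simp
qed

lemma lattice_generated:
  assumes "\<bar>cross X W\<bar> = 1"
  shows "\<exists>i j k. v = vadd (vadd (smul i X) (smul j f)) (smul k W)"
proof (intro exI)
  show "v = vadd (vadd (smul (cross X W * cross v W) X) (smul 0 f)) (smul (cross X W * cross X v) W)"
    by (subst basis_decomp[OF assms, of v]) (simp add: smul_def vadd_def)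
qed

lemma lattice_congruence_set:
  assumes "\<bar>cross X W\<bar> = 1" "smul n W = vadd (smul \<mu> X) f"
  shows "UNIV = {v. \<exists>x y. smul n v = vadd (smul x X) (smul y f) \<and> [x = \<mu> * y] (mod n)}"
proof -
  have "\<exists>x y. smul n v = vadd (smul x X) (smul y f) \<and> [x = \<mu> * y] (mod n)" for v
  proof -
    obtain a b where v: "v = vadd (smul a X) (smul b W)"
      using basis_decomp[OF assms(1)] by blast
    have "smul n v = vadd (smul (n * a) X) (smul b (smul n W))"
      unfolding v by (simp add: smul_def vadd_def algebra_simps)
    also have "\<dots> = vadd (smul (n * a + \<mu> * b) X) (smul b f)"
      unfolding assms(2) by (simp add: smul_def vadd_def algebra_simps)
    finally have "smul n v = vadd (smul (n * a + \<mu> * b) X) (smul b f)" .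
    moreover have "[n * a + \<mu> * b = \<mu> * b] (mod n)"
      by (simp add: cong_iff_dvd_diff)
    ultimately show ?thesis by blast
  qed
  then show ?thesis by blast
qed

lemma basis_partners_pairing_cong:
  assumes basis: "\<bar>cross X Y\<bar> = 1" and "\<bar>cross X Y'\<bar> = 1" "\<gamma> \<noteq> 0"
    and "bf G X X = \<gamma> * n" "bf G X Y = \<gamma> * \<mu>" "bf G X Y' = \<gamma> * \<mu>'"
  shows "[\<mu>' = \<mu>] (mod n) \<or> [\<mu>' = - \<mu>] (mod n)"
proof -
  define a b where "a = cross X Y * cross Y' Y" and "b = cross X Y * cross X Y'"
  have Y': "Y' = vadd (smul a X) (smul b Y)"
    unfolding a_def b_def by (rule basis_decomp[OF basis])
  have "\<gamma> * \<mu>' = \<gamma> * (a * n + b * \<mu>)"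
    using arg_cong[OF Y', of "bf G X"] assms(4-6) by (simp add: algebra_simps)
  then have "\<mu>' = a * n + b * \<mu>" using \<open>\<gamma> \<noteq> 0\<close> by simp
  then have "\<mu>' - b * \<mu> = n * a" by simp
  moreover have "\<bar>b\<bar> = 1" using assms(1,2) by (simp add: b_def abs_mult)
  ultimately show ?thesis
    by (auto simp: cong_iff_dvd_diff abs_if split: if_splits)
qed

lemma basis_partner_with_pairing:
  assumes "\<bar>cross X Y\<bar> = 1" "bf G X X = \<gamma> * n" "bf G X Y = \<gamma> * \<mu>'"
    and "[\<mu>' = \<mu>] (mod n) \<or> [\<mu>' = - \<mu>] (mod n)"
  shows "\<exists>Y'. \<bar>cross X Y'\<bar> = 1 \<and> bf G X Y' = \<gamma> * \<mu>"
proof -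
  obtain \<tau> k where \<tau>: "\<bar>\<tau>\<bar> = 1" and k: "\<mu> = \<tau> * \<mu>' + k * n"
  proof (cases "[\<mu>' = \<mu>] (mod n)")
    case True
    then obtain t where "\<mu>' - \<mu> = n * t" by (auto simp: cong_iff_dvd_diff dvd_def)
    then show ?thesis using that[of 1 "- t"] by (simp add: algebra_simps)
  next
    case False
    then obtain t where "\<mu>' + \<mu> = n * t" using assms(4) by (auto simp: cong_iff_dvd_diff dvd_def)
    then show ?thesis using that[of "- 1" t] by (simp add: algebra_simps)
  qed
  have "\<bar>cross X (vadd (smul \<tau> Y) (smul k X))\<bar> = 1"
    using assms(1) \<tau> by (simp add: abs_mult)
  moreover have "bf G X (vadd (smul \<tau> Y) (smul k X)) = \<gamma> * \<mu>"
    using assms(2,3) k by (simp add: algebra_simps)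
  ultimately show ?thesis by blast
qed

lemma isometry_of_bases:
  assumes basis: "\<bar>cross X Y\<bar> = 1" and basis': "\<bar>cross X' Y'\<bar> = 1"
    and XX: "bf G X' X' = bf G X X" and XY: "bf G X' Y' = bf G X Y" and "bf G X X \<noteq> 0"
  shows "\<exists>\<phi>. isometry G \<phi> \<and> \<phi> X = X'"
proof -
  have "(cross X Y)\<^sup>2 = 1" "(cross X' Y')\<^sup>2 = 1"
    using basis basis' mult_self_eq_1_if_abs_eq_1 by (simp_all add: power2_eq_square)
  then have "bf G X X * bf G Y' Y' - (bf G X Y)\<^sup>2 = bf G X X * bf G Y Y - (bf G X Y)\<^sup>2"
    using gram_det_cross[of G X Y] gram_det_cross[of G X' Y'] XX XY by simp
  then have YY: "bf G Y' Y' = bf G Y Y" using \<open>bf G X X \<noteq> 0\<close> by simp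
  define c c' where "c = cross X Y" and "c' = cross X' Y'"
  have cc: "c * c = 1" "c' * c' = 1" unfolding c_def c'_def using assms mult_self_eq_1_if_abs_eq_1 by auto
  define \<phi> where "\<phi> v = vadd (smul (c * cross v Y) X') (smul (c * cross X v) Y')" for v
  define \<psi> where "\<psi> u = vadd (smul (c' * cross u Y') X) (smul (c' * cross X' u) Y)" for u
  have "\<psi> (\<phi> v) = v" for v
  proof -
    have "\<psi> (\<phi> v) = vadd (smul (c * cross v Y * (c' * c')) X) (smul (c * cross X v * (c' * c')) Y)"
      by (simp add: \<phi>_def \<psi>_def c'_def algebra_simps)
    also have "\<dots> = v"
      unfolding cc mult_1_right c_def by (rule basis_decomp[OF basis, symmetric])
    finally show ?thesis .
  qed
  moreover have "\<phi> (\<psi> u) = u" for u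
  proof -
    have "\<phi> (\<psi> u) = vadd (smul (c' * cross u Y' * (c * c)) X') (smul (c' * cross X' u * (c * c)) Y')"
      by (simp add: \<phi>_def \<psi>_def c_def algebra_simps)
    also have "\<dots> = u"
      unfolding cc mult_1_right c'_def by (rule basis_decomp[OF basis', symmetric])
    finally show ?thesis .
  qed
  ultimately have "bij \<phi>" by (intro o_bij[of \<psi>]) (simp_all add: fun_eq_iff)
  moreover have "\<phi> (vadd u v) = vadd (\<phi> u) (\<phi> v)" for u v
    by (simp add: \<phi>_def smul_def vadd_def cross_def algebra_simps)
  moreover have "bf G (\<phi> u) (\<phi> v) = bf G u v" for u v
  proof -
    have "bf G (\<phi> u) (\<phi> v) =
        bf G (vadd (smul (c * cross u Y) X) (smul (c * cross X u) Y))
             (vadd (smul (c * cross v Y) X) (smul (c * cross X v) Y))"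
      using XX XY YY bf_sym[of G Y X] bf_sym[of G Y' X'] by (simp add: \<phi>_def)
    also have "\<dots> = bf G u v"
      unfolding c_def by (simp only: basis_decomp[OF basis, symmetric])
    finally show ?thesis .
  qed
  moreover have "\<phi> X = X'" using cc by (simp add: \<phi>_def c_def smul_def vadd_def)
  ultimately show ?thesis unfolding isometry_def by blast
qed

lemma discriminant_of_basis:
  assumes "even_hyperbolic G" "\<gamma> > 0" "\<bar>cross X W\<bar> = 1"
    and "bf G X X = \<gamma> * n" "bf G X W = \<gamma> * \<mu>"
  defines "\<delta> \<equiv> \<gamma> * \<mu>\<^sup>2 - n * bf G W W"
  shows "gram_det G = - (\<gamma> * \<delta>)" and "\<delta> > 0" and "[\<delta> = \<mu>\<^sup>2 * \<gamma>] (mod 2 * n)"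
proof -
  show det: "gram_det G = - (\<gamma> * \<delta>)"
    using gram_det_cross[of G X W] assms(4,5) mult_self_eq_1_if_abs_eq_1[OF assms(3)]
    by (simp add: \<delta>_def power2_eq_square algebra_simps)
  then show "\<delta> > 0"
    using gram_det_neg[OF assms(1)] \<open>\<gamma> > 0\<close> by (simp add: zero_less_mult_iff)
  show "[\<delta> = \<mu>\<^sup>2 * \<gamma>] (mod 2 * n)"
    using even_bf_self[OF assms(1), of W] by (auto simp: \<delta>_def cong_iff_dvd_diff algebra_simps)
qed

lemma invariant_rep_sign_unique:
  assumes "primitive X" "bf G X X = \<gamma> * n" "\<gamma> \<noteq> 0" "n \<noteq> 0" "pairing_ideal G X \<gamma>"
    and "invariant_rep G n X f1 \<mu>1" "invariant_rep G n X f2 \<mu>2"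
  shows "[\<mu>2 = \<mu>1] (mod n) \<or> [\<mu>2 = - \<mu>1] (mod n)"
proof -
  obtain W1 where "\<bar>cross X W1\<bar> = 1" "bf G X W1 = \<gamma> * \<mu>1"
    using invariant_rep_basis[OF assms(1-6)] .
  moreover obtain W2 where "\<bar>cross X W2\<bar> = 1" "bf G X W2 = \<gamma> * \<mu>2"
    using invariant_rep_basis[OF assms(1-5,7)] .
  ultimately show ?thesis using basis_partners_pairing_cong assms(2,3) by blast
qed

lemma isometry_of_same_invariant:
  assumes "\<gamma> \<noteq> 0" "n \<noteq> 0"
    and "primitive X" "bf G X X = \<gamma> * n" "pairing_ideal G X \<gamma>" "invariant_rep G n X f \<mu>"
    and "primitive P" "bf G P P = \<gamma> * n" "pairing_ideal G P \<gamma>" "invariant_rep G n P fP \<mu>P"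
    and "[\<mu>P = \<mu>] (mod n) \<or> [\<mu>P = - \<mu>] (mod n)"
  shows "\<exists>\<phi>. isometry G \<phi> \<and> \<phi> X = P"
proof -
  obtain W where W: "\<bar>cross X W\<bar> = 1" "bf G X W = \<gamma> * \<mu>"
    using invariant_rep_basis[OF assms(3,4,1,2,5,6)] .
  obtain WP where "\<bar>cross P WP\<bar> = 1" "bf G P WP = \<gamma> * \<mu>P"
    using invariant_rep_basis[OF assms(7,8,1,2,9,10)] .
  then obtain Y where "\<bar>cross P Y\<bar> = 1" "bf G P Y = \<gamma> * \<mu>"
    using basis_partner_with_pairing[OF _ assms(8) _ assms(11)] by blast
  then show ?thesis
    using isometry_of_bases[OF W(1)] W(2) assms(1,2,4,8) by simp
qed

theorem proposition3p1p1:
  fixes G :: gram and a1 b1 c \<gamma> :: int and H f :: vec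
  assumes hyp: "even_hyperbolic G"
    and pos: "a1 > 0" "b1 > 0" "c > 0" "\<gamma> > 0"
    and prim: "primitive H"
    and sq: "bf G H H = 2 * a1 * b1 * c ^ 2"
    and ideal: "pairing_ideal G H \<gamma>"
    and gdvd: "\<gamma> dvd 2 * a1 * b1"
    and fgen: "perp_generator G H f"
  shows
   "let n = 2 * a1 * b1 * c ^ 2 div \<gamma>; \<delta> = - gram_det G div \<gamma> in
      \<gamma> dvd gram_det G \<and> \<delta> > 0 \<and>
      bf G f f = - (2 * a1 * b1 * c ^ 2 * \<delta>) div \<gamma> \<and>
      \<gamma> * bf G f f = - (2 * a1 * b1 * c ^ 2 * \<delta>) \<and>
      (\<exists>\<mu>. coprime \<mu> n \<and> [\<delta> = \<mu> ^ 2 * \<gamma>] (mod (4 * a1 * b1 * c ^ 2 div \<gamma>)) \<and>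
         (\<exists>w. smul n w = vadd (smul \<mu> H) f \<and>
              (\<forall>v. \<exists>i j k. v = vadd (vadd (smul i H) (smul j f)) (smul k w))) \<and>
         UNIV = {v. \<exists>x y. smul n v = vadd (smul x H) (smul y f) \<and> [x = \<mu> * y] (mod n)} \<and>
         (\<forall>z x y. smul n z = vadd (smul x H) (smul y f) \<longrightarrow>
              n * bf G z z = \<gamma> * x ^ 2 - \<delta> * y ^ 2) \<and>
         (\<forall>P. primitive P \<and> bf G P P = 2 * a1 * b1 * c ^ 2 \<and> pairing_ideal G P \<gamma> \<and>
              (\<exists>fP \<mu>P. invariant_rep G n P fP \<mu>P \<and>
                  ([\<mu>P = \<mu>] (mod n) \<or> [\<mu>P = - \<mu>] (mod n)))
            \<longrightarrow> (\<exists>\<phi>. isometry G \<phi> \<and> \<phi> H = P))) \<and>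
      (\<forall>f1 f2 \<mu>1 \<mu>2. invariant_rep G n H f1 \<mu>1 \<and> invariant_rep G n H f2 \<mu>2 \<longrightarrow>
          [\<mu>2 = \<mu>1] (mod n) \<or> [\<mu>2 = - \<mu>1] (mod n))"
proof -
  have "\<gamma> dvd 2 * a1 * b1 * c ^ 2" using gdvd by simp
  then obtain n where hn: "2 * a1 * b1 * c ^ 2 = \<gamma> * n" by (auto simp: dvd_def)
  have "0 < \<gamma> * n" unfolding hn[symmetric] using pos by simp
  then have "n > 0" using pos(4) by (simp add: zero_less_mult_iff)
  have n_eq: "2 * a1 * b1 * c ^ 2 div \<gamma> = n" unfolding hn using pos(4) by simp
  have h4: "4 * a1 * b1 * c ^ 2 = \<gamma> * (2 * n)" using hn by simp
  have four: "4 * a1 * b1 * c ^ 2 div \<gamma> = 2 * n" unfolding h4 using pos(4) by simp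
  have HH: "bf G H H = \<gamma> * n" using sq hn by simp
  have "\<gamma> \<noteq> 0" "n \<noteq> 0" using pos(4) \<open>n > 0\<close> by simp_all
  obtain \<mu> where \<mu>: "invariant_rep G n H f \<mu>"
    using invariant_rep_exists[OF prim HH \<open>\<gamma> \<noteq> 0\<close> ideal fgen] by blast
  obtain W where W: "smul n W = vadd (smul \<mu> H) f" "\<bar>cross H W\<bar> = 1" "bf G H W = \<gamma> * \<mu>"
    using invariant_rep_basis[OF prim HH \<open>\<gamma> \<noteq> 0\<close> \<open>n \<noteq> 0\<close> ideal \<mu>] .
  define \<delta> where "\<delta> = \<gamma> * \<mu>\<^sup>2 - n * bf G W W"
  have det: "gram_det G = - (\<gamma> * \<delta>)" and "\<delta> > 0" and "[\<delta> = \<mu>\<^sup>2 * \<gamma>] (mod 2 * n)"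
    using discriminant_of_basis[OF hyp pos(4) W(2) HH W(3)] unfolding \<delta>_def by auto
  have \<delta>_eq: "- gram_det G div \<gamma> = \<delta>" using det pos(4) by simp
  have Hf: "bf G H f = 0" using fgen unfolding perp_generator_def by simp
  have ff: "bf G f f = - n * \<delta>" using bf_complement_self[OF W(1) HH W(3)] by (simp add: \<delta>_def)
  have "coprime \<mu> n" using pairing_ideal_coprime[OF W(2) HH W(3) \<open>\<gamma> \<noteq> 0\<close> ideal] .
  have ff_\<gamma>: "\<gamma> * bf G f f = - (\<gamma> * n * \<delta>)" using ff by simp
  then have "bf G f f = - (\<gamma> * n * \<delta>) div \<gamma>" using pos(4) by (metis nonzero_mult_div_cancel_left less_irrefl)
  moreover have "\<gamma> dvd gram_det G" using det by simp
  ultimately show ?thesis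
    unfolding Let_def n_eq \<delta>_eq four unfolding hn
    using ff_\<gamma> \<open>\<delta> > 0\<close> \<open>coprime \<mu> n\<close> \<open>[\<delta> = \<mu>\<^sup>2 * \<gamma>] (mod 2 * n)\<close> W(1)
      lattice_generated[OF W(2)] lattice_congruence_set[OF W(2,1)] bf_fraction[OF _ Hf HH ff \<open>n \<noteq> 0\<close>]
      isometry_of_same_invariant[OF \<open>\<gamma> \<noteq> 0\<close> \<open>n \<noteq> 0\<close> prim HH ideal \<mu>]
      invariant_rep_sign_unique[OF prim HH \<open>\<gamma> \<noteq> 0\<close> \<open>n \<noteq> 0\<close> ideal]
    by blast
qed

end
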